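(* Let $m\ge 1$ and consider any complete run of the labeled chip-firing process on $\mathbb{Z}$ starting with $2m$ chips labeled $-m,\dots,-1,1,\dots,m$ at site $0$. For integers $x,y\ge 0$ let the firing move $(x,y)$ denote the $(\min(x,y)+1)$-th to last firing move performed at site $x-y$ in this run. Then for each chip $k$ with $-m\le k<0$ and each $x$ with $0\le x\le m-1$, the position of chip $k$ immediately preceding firing move $(x,-k-1)$ is at most $x+k+1$. Similarly, for each chip $k$ with $0<k\le m$ and each $y$ with $0\le y\le m-1$, the position of chip $k$ immediately preceding firing move $(k-1,y)$ is at least $k-1-y$.
   Context: Labeled chip-firing on the infinite path graph $\mathbb{Z}$ (each integer $i$ adjacent to $i-1$ and $i+1$): a firing move consists of choosing two chips with labels $a<b$ located at a common site $i$, and moving chip $a$ to site $i-1$ and chip $b$ to site $i+1$. A complete run is a sequence of legal firing moves ending in a configuration where all chips occupy distinct sites (so no further firing move is possible). *)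

theory Defs
  imports Main
begin

text \<open>A configuration assigns to every label its site: int => int
  (only labels in the chip set matter). A firing move is recorded as the pair
  (a, b) of chip labels fired, with a < b, both at a common site i;
  chip a moves to i - 1 and chip b to i + 1.\<close>

type_synonym config = "int \<Rightarrow> int"

definition chips :: "int \<Rightarrow> int set" where
  "chips m = {-m..m} - {0}"

definition init_config :: config where
  "init_config = (\<lambda>k. 0)"

definition fire :: "config \<Rightarrow> int \<times> int \<Rightarrow> config" where
  "fire c ab = (case ab of (a, b) \<Rightarrow> c(a := c a - 1, b := c b + 1))"

text \<open>Configuration immediately preceding the t-th move (index from 0);
  for t = length ms this is the final configuration.\<close>
definition conf_at :: "(int \<times> int) list \<Rightarrow> nat \<Rightarrow> config" where
  "conf_at ms t = foldl fire init_config (take t ms)"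

definition legal_run :: "int \<Rightarrow> (int \<times> int) list \<Rightarrow> bool" where
  "legal_run m ms \<longleftrightarrow> (\<forall>t < length ms.
     fst (ms ! t) < snd (ms ! t) \<and> fst (ms ! t) \<in> chips m \<and> snd (ms ! t) \<in> chips m \<and>
     conf_at ms t (fst (ms ! t)) = conf_at ms t (snd (ms ! t)))"

definition complete_run :: "int \<Rightarrow> (int \<times> int) list \<Rightarrow> bool" where
  "complete_run m ms \<longleftrightarrow> legal_run m ms \<and> inj_on (conf_at ms (length ms)) (chips m)"

definition move_site :: "(int \<times> int) list \<Rightarrow> nat \<Rightarrow> int" where
  "move_site ms t = conf_at ms t (fst (ms ! t))"

definition is_move_xy :: "(int \<times> int) list \<Rightarrow> int \<Rightarrow> int \<Rightarrow> nat \<Rightarrow> bool" where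
  "is_move_xy ms x y t \<longleftrightarrow> t < length ms \<and> move_site ms t = x - y \<and>
     int (card {t'. t < t' \<and> t' < length ms \<and> move_site ms t' = x - y}) = min x y"

end

theory Submission
  imports Defs
begin

text \<open>Forgetting labels, the process is ordinary chip-firing of \<open>2m\<close> chips on \<open>\<int>\<close>. Every
  complete run fires site \<open>s\<close> exactly \<open>T(m - |s|)\<close> times (\<open>T\<close> the triangular numbers) and
  ends with one chip on each nonzero site of \<open>[-m, m]\<close>: the chip counts are the final counts
  minus the discrete Laplacian of the remaining firings, these stay nonnegative because a site
  with nothing left to fire never holds two chips, and at the end they vanish by a maximum
  principle. The profile of remaining firings also keeps a regularity invariant, which pins down
  the neighbouring counts at a move with few firings left and shows that such a move empties its
  site. Induction on time then bounds labels: a chip at site \<open>i\<close> when \<open>i\<close> fires with \<open>r\<close> firings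
  left there has label at least \<open>-(r + max 0 (-i))\<close>; in particular a negative chip ends at a
  site not exceeding its label. If chip \<open>k < 0\<close> were right of \<open>x - y\<close> just before move
  \<open>(x, y)\<close>, it would later have to be fired leftwards from \<open>x - y + 1\<close>, where too few firings
  remain for this bound. Reflecting sites and labels gives the statement for positive chips.\<close>

section \<open>The odometer\<close>

definition triangular :: "int \<Rightarrow> int" where
  "triangular d = (let n = max 0 d in n * (n + 1) div 2)"

text \<open>\<open>odometer m s\<close> is the number of firings at site \<open>s\<close> in every complete run, and
  \<open>final_occupancy m\<close> the final configuration: one chip on each nonzero site of \<open>[-m, m]\<close>.
  If \<open>R s\<close> firings remain to be done at each site \<open>s\<close>, then \<open>occupancy m R s\<close> chips are
  currently at \<open>s\<close>.\<close>

definition odometer :: "int \<Rightarrow> int \<Rightarrow> int" where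
  "odometer m s = triangular (m - \<bar>s\<bar>)"

definition final_occupancy :: "int \<Rightarrow> int \<Rightarrow> int" where
  "final_occupancy m s = (if s \<noteq> 0 \<and> \<bar>s\<bar> \<le> m then 1 else 0)"

definition occupancy :: "int \<Rightarrow> (int \<Rightarrow> int) \<Rightarrow> int \<Rightarrow> int" where
  "occupancy m R s = final_occupancy m s - (R (s - 1) + R (s + 1) - 2 * R s)"

lemma triangular_Suc: "triangular (d + 1) = triangular d + max 0 (d + 1)"
proof (cases "0 \<le> d")
  case True
  have "(d + 1) * (d + 1 + 1) = d * (d + 1) + 2 * (d + 1)"
    by (simp add: algebra_simps)
  then show ?thesis
    using True unfolding triangular_def Let_def by simp
qed (simp add: triangular_def)

lemma triangular_ge: "max 0 d \<le> triangular d"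
proof -
  define n where "n = max 0 d"
  have "2 * n \<le> n * (n + 1)"
    using mult_right_mono[of 1 n n] unfolding n_def by (cases "1 \<le> d") (auto simp: algebra_simps)
  then show ?thesis
    unfolding triangular_def Let_def n_def[symmetric] by linarith
qed

lemma odometer_uminus [simp]: "odometer m (- s) = odometer m s"
  by (simp add: odometer_def)

lemma odometer_nonneg: "0 \<le> odometer m s"
  using triangular_ge[of "m - \<bar>s\<bar>"] by (simp add: odometer_def)

lemma odometer_ge: "m - \<bar>s\<bar> \<le> odometer m s"
  using triangular_ge[of "m - \<bar>s\<bar>"] by (simp add: odometer_def)

lemma odometer_eq_0: "m \<le> \<bar>s\<bar> \<Longrightarrow> odometer m s = 0"
  by (simp add: odometer_def triangular_def)

lemma final_occupancy_le: "final_occupancy m s \<le> (if s = 0 then 0 else 1)"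
  by (simp add: final_occupancy_def)

lemma final_occupancy_le_1: "final_occupancy m s \<le> 1"
  by (simp add: final_occupancy_def)

lemma occupancy_reflect: "occupancy m (\<lambda>s. R (- s)) (- v) = occupancy m R v"
  by (simp add: occupancy_def final_occupancy_def algebra_simps)

lemma occupancy_decrement:
  "occupancy m (R(v := R v - 1)) i
     = occupancy m R i - (if i = v then 2 else 0) + (if i = v - 1 \<or> i = v + 1 then 1 else 0)"
  by (simp add: occupancy_def)

lemma occupancy_odometer:
  assumes "0 \<le> m"
  shows "occupancy m (odometer m) s = (if s = 0 then 2 * m else 0)"
proof -
  have right: "occupancy m (odometer m) s = (if s = 0 then 2 * m else 0)" if "0 \<le> s" for s
  proof (cases "s = 0")
    case True
    then show ?thesis
      using triangular_Suc[of "m - 1"] assms by (simp add: occupancy_def odometer_def final_occupancy_def)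
  next
    case False
    then have "\<bar>s - 1\<bar> = s - 1" "\<bar>s + 1\<bar> = s + 1" "\<bar>s\<bar> = s"
      using that by auto
    then show ?thesis
      using triangular_Suc[of "m - s"] triangular_Suc[of "m - s - 1"] False
      by (simp add: occupancy_def odometer_def final_occupancy_def max_def algebra_simps)
  qed
  show ?thesis
  proof (cases "0 \<le> s")
    case False
    then show ?thesis
      using right[of "- s"] occupancy_reflect[of m "odometer m" s] by simp
  qed (rule right)
qed

section \<open>Regular profiles\<close>

text \<open>Below the cap \<open>m - |i| - 1\<close>, a regular profile is non-increasing away from the origin, with
  steps of at most one.\<close>

definition regular_right :: "int \<Rightarrow> (int \<Rightarrow> int) \<Rightarrow> bool" where
  "regular_right m R \<longleftrightarrow> (\<forall>i \<ge> 0.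
     min (R i - 1) (m - i - 1) \<le> R (i + 1) \<and> min (R (i + 1)) (m - i - 1) \<le> R i)"

definition regular_profile :: "int \<Rightarrow> (int \<Rightarrow> int) \<Rightarrow> bool" where
  "regular_profile m R \<longleftrightarrow> regular_right m R \<and> regular_right m (\<lambda>s. R (- s))"

lemma regular_profile_reflect: "regular_profile m (\<lambda>s. R (- s)) = regular_profile m R"
  by (auto simp: regular_profile_def)

lemma regular_profile_succ:
  assumes "regular_profile m R"
  shows "min (R v) (m - \<bar>v\<bar>) - (if 0 \<le> v then 1 else 0) \<le> R (v + 1)"
proof (cases "0 \<le> v")
  case True
  then have "min (R v - 1) (m - v - 1) \<le> R (v + 1)"
    using assms by (simp add: regular_profile_def regular_right_def)
  then show ?thesis using True by (auto simp: min_def)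
next
  case False
  have "\<forall>i \<ge> 0. min (R (- (i + 1))) (m - i - 1) \<le> R (- i)"
    using assms by (simp add: regular_profile_def regular_right_def)
  from this[rule_format, of "- v - 1"] have "min (R v) (m + v) \<le> R (v + 1)"
    using False by (simp add: add.commute)
  then show ?thesis using False by simp
qed

lemma regular_profile_pred:
  assumes "regular_profile m R"
  shows "min (R v) (m - \<bar>v\<bar>) - (if v \<le> 0 then 1 else 0) \<le> R (v - 1)"
  using regular_profile_succ[of m "\<lambda>s. R (- s)" "- v"] assms
  by (simp add: regular_profile_reflect)

lemma regular_right_decrement:
  assumes reg: "regular_profile m R" and occ: "2 \<le> occupancy m R v"
  shows "regular_right m (R(v := R v - 1))"
  unfolding regular_right_def
proof (intro allI impI conjI)
  have succ: "min (R v) (m - \<bar>v\<bar>) - (if 0 \<le> v then 1 else 0) \<le> R (v + 1)"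
    and pred: "min (R v) (m - \<bar>v\<bar>) - (if v \<le> 0 then 1 else 0) \<le> R (v - 1)"
    using regular_profile_succ[OF reg] regular_profile_pred[OF reg] .
  have occ': "R (v - 1) + R (v + 1) \<le> 2 * R v + final_occupancy m v - 2"
    using occ by (simp add: occupancy_def)
  have right: "min (R i - 1) (m - i - 1) \<le> R (i + 1)" "min (R (i + 1)) (m - i - 1) \<le> R i"
    if "0 \<le> i" for i
    using reg that by (simp_all add: regular_profile_def regular_right_def)
  fix i :: int
  assume i: "0 \<le> i"
  show "min ((R(v := R v - 1)) i - 1) (m - i - 1) \<le> (R(v := R v - 1)) (i + 1)"
  proof (cases "v = i + 1")
    case True
    then show ?thesis using i succ occ' final_occupancy_le[of m v] by (auto simp: min_def split: if_splits)
  next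
    case False
    then show ?thesis using right(1)[OF i] by (auto simp: min_def split: if_splits)
  qed
  show "min ((R(v := R v - 1)) (i + 1)) (m - i - 1) \<le> (R(v := R v - 1)) i"
  proof (cases "v = i")
    case True
    then show ?thesis using i pred occ' final_occupancy_le[of m v] by (auto simp: min_def split: if_splits)
  next
    case False
    then show ?thesis using right(2)[OF i] by (auto simp: min_def split: if_splits)
  qed
qed

lemma regular_profile_decrement:
  assumes "regular_profile m R" and "2 \<le> occupancy m R v"
  shows "regular_profile m (R(v := R v - 1))"
proof -
  have "(\<lambda>s. (R(v := R v - 1)) (- s)) = (\<lambda>s. R (- s))(- v := R v - 1)"
    by auto
  moreover have "regular_right m ((\<lambda>s. R (- s))(- v := R v - 1))"
    using regular_right_decrement[of m "\<lambda>s. R (- s)" "- v"] assms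
    by (simp add: regular_profile_reflect occupancy_reflect)
  ultimately show ?thesis
    using regular_right_decrement[OF assms] by (simp add: regular_profile_def)
qed

lemma regular_profile_firing_site:
  assumes reg: "regular_profile m R" and occ: "2 \<le> occupancy m R v" and le: "R v \<le> m - \<bar>v\<bar>"
  shows "occupancy m R v = 2 \<and> R (v + 1) = R v - (if 0 \<le> v then 1 else 0)
    \<and> R (v - 1) = R v - (if v \<le> 0 then 1 else 0)"
proof -
  have "R v - (if 0 \<le> v then 1 else 0) \<le> R (v + 1)"
    and "R v - (if v \<le> 0 then 1 else 0) \<le> R (v - 1)"
    using regular_profile_succ[OF reg, of v] regular_profile_pred[OF reg, of v] le by simp_all
  then show ?thesis
    using occ final_occupancy_le[of m v] by (simp add: occupancy_def split: if_splits)
qed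

lemma regular_profile_odometer: "regular_profile m (odometer m)"
proof -
  have "regular_right m (odometer m)"
    unfolding regular_right_def
  proof (intro allI impI)
    fix i :: int
    assume "0 \<le> i"
    then have "m - i - 1 \<le> odometer m i" "m - i - 1 \<le> odometer m (i + 1)"
      using odometer_ge[of m i] odometer_ge[of m "i + 1"] by simp_all
    then show "min (odometer m i - 1) (m - i - 1) \<le> odometer m (i + 1)
      \<and> min (odometer m (i + 1)) (m - i - 1) \<le> odometer m i"
      by (simp add: min_le_iff_disj)
  qed
  then show ?thesis by (simp add: regular_profile_def)
qed

text \<open>Maximum principle: at the outermost points where \<open>R\<close> attains a positive maximum, at least
  two chips would sit.\<close>

lemma stable_profile_zero:
  assumes nonneg: "\<And>s. 0 \<le> R s" and outside: "\<And>s. m \<le> \<bar>s\<bar> \<Longrightarrow> R s = 0"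
    and stable: "\<And>s. occupancy m R s \<le> 1"
  shows "R s = 0"
proof (rule ccontr)
  assume "R s \<noteq> 0"
  have inside: "\<bar>i\<bar> < m" if "R i \<noteq> 0" for i
    using outside[of i] that by linarith
  have "s \<in> {-m..m}"
    using inside[OF \<open>R s \<noteq> 0\<close>] by (simp add: abs_less_iff)
  define M where "M = Max (R ` {-m..m})"
  have "R s \<le> M"
    unfolding M_def using \<open>s \<in> {-m..m}\<close> by (intro Max_ge) auto
  then have M_pos: "0 < M"
    using nonneg[of s] \<open>R s \<noteq> 0\<close> by linarith
  have le_M: "R i \<le> M" for i
  proof (cases "R i = 0")
    case False
    then show ?thesis unfolding M_def using inside[of i] by (intro Max_ge) (auto simp: abs_less_iff)
  qed (use M_pos in simp)
  define B where "B = {i. R i = M}"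
  have B_inside: "\<bar>i\<bar> < m" if "i \<in> B" for i
    using inside[of i] that M_pos by (simp add: B_def)
  then have "finite B"
    by (intro finite_subset[of B "{-m..m}"]) (force simp: abs_less_iff)+
  have "M \<in> R ` {-m..m}"
    unfolding M_def using \<open>s \<in> {-m..m}\<close> by (intro Max_in) auto
  then have "B \<noteq> {}" by (auto simp: B_def)
  have peak: "i = 0" if "i \<in> B" "R (i - 1) < M \<or> R (i + 1) < M" for i
  proof (rule ccontr)
    assume "i \<noteq> 0"
    then have "final_occupancy m i = 1"
      using B_inside[OF that(1)] by (simp add: final_occupancy_def)
    then have "2 \<le> occupancy m R i"
      using that le_M[of "i - 1"] le_M[of "i + 1"] by (auto simp: occupancy_def B_def)
    then show False using stable[of i] by simp
  qed
  have "Max B \<in> B" "Min B \<in> B"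
    using \<open>finite B\<close> \<open>B \<noteq> {}\<close> by simp_all
  have "R (Max B + 1) < M" "R (Min B - 1) < M"
    using Max_ge[OF \<open>finite B\<close>, of "Max B + 1"] Min_le[OF \<open>finite B\<close>, of "Min B - 1"] le_M
    by (fastforce simp: B_def less_le)+
  then have "Max B = 0" "Min B = 0"
    using peak \<open>Max B \<in> B\<close> \<open>Min B \<in> B\<close> by auto
  then have "2 \<le> occupancy m R 0"
    using \<open>R (Max B + 1) < M\<close> \<open>R (Min B - 1) < M\<close> \<open>Max B \<in> B\<close>
    by (simp add: occupancy_def final_occupancy_def B_def)
  then show False using stable[of 0] by simp
qed

section \<open>Firing counts along a run\<close>

definition fire_count :: "(int \<times> int) list \<Rightarrow> int \<Rightarrow> nat \<Rightarrow> nat" where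
  "fire_count ms s t = card {t'. t' < t \<and> move_site ms t' = s}"

definition remaining :: "int \<Rightarrow> (int \<times> int) list \<Rightarrow> nat \<Rightarrow> int \<Rightarrow> int" where
  "remaining m ms t s = odometer m s - int (fire_count ms s t)"

definition occupants :: "int \<Rightarrow> (int \<times> int) list \<Rightarrow> nat \<Rightarrow> int \<Rightarrow> nat" where
  "occupants m ms t i = card {k \<in> chips m. conf_at ms t k = i}"

lemma fire_count_0 [simp]: "fire_count ms s 0 = 0"
  by (simp add: fire_count_def)

lemma fire_count_Suc:
  "fire_count ms s (Suc t) = fire_count ms s t + (if move_site ms t = s then 1 else 0)"
proof -
  have "{t'. t' < Suc t \<and> move_site ms t' = s} = (if move_site ms t = s
      then insert t {t'. t' < t \<and> move_site ms t' = s} else {t'. t' < t \<and> move_site ms t' = s})"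
    by (auto simp: less_Suc_eq)
  then show ?thesis unfolding fire_count_def by simp
qed

lemma fire_count_mono: "t \<le> t' \<Longrightarrow> fire_count ms s t \<le> fire_count ms s t'"
  unfolding fire_count_def by (rule card_mono) auto

lemma fire_count_attained:
  "v < fire_count ms s T \<Longrightarrow> \<exists>t < T. move_site ms t = s \<and> fire_count ms s t = v"
proof (induction T)
  case (Suc T)
  show ?case
  proof (cases "v < fire_count ms s T")
    case True
    then show ?thesis using Suc.IH less_SucI by blast
  next
    case False
    then show ?thesis using Suc.prems by (auto simp: fire_count_Suc split: if_splits)
  qed
qed simp

lemma remaining_0: "remaining m ms 0 = odometer m"
  by (simp add: remaining_def fun_eq_iff)

lemma remaining_Suc:
  "remaining m ms (Suc t) = (remaining m ms t)(move_site ms t := remaining m ms t (move_site ms t) - 1)"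
  by (simp add: remaining_def fire_count_Suc fun_eq_iff)

lemma remaining_antimono: "t \<le> t' \<Longrightarrow> remaining m ms t' s \<le> remaining m ms t s"
  using fire_count_mono[of t t' ms s] by (simp add: remaining_def)

lemma finite_chips: "finite (chips m)"
  by (simp add: chips_def)

lemma card_chips: "0 \<le> m \<Longrightarrow> card (chips m) = nat (2 * m)"
  by (simp add: chips_def card_Diff_singleton)

lemma uminus_chips_iff [simp]: "- k \<in> chips m \<longleftrightarrow> k \<in> chips m"
  by (auto simp: chips_def)

lemma conf_at_Suc: "t < length ms \<Longrightarrow> conf_at ms (Suc t) = fire (conf_at ms t) (ms ! t)"
  by (simp add: conf_at_def take_Suc_conv_app_nth)

lemma exists_switch:
  assumes "P t1" "\<not> P t2" "t1 \<le> t2"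
  shows "\<exists>t. t1 \<le> t \<and> t < t2 \<and> P t \<and> \<not> P (Suc t)"
  using assms
proof (induction t2)
  case (Suc t2)
  show ?case
  proof (cases "P t2")
    case True
    then show ?thesis using Suc.prems by (intro exI[of _ t2]) (auto simp: le_Suc_eq)
  next
    case False
    then have "t1 \<le> t2" using Suc.prems by (cases "t1 = Suc t2") auto
    then show ?thesis using Suc.IH[OF Suc.prems(1) False] by auto
  qed
qed simp

locale legal_chip_run =
  fixes m :: int and ms :: "(int \<times> int) list"
  assumes m_nonneg: "0 \<le> m" and legal: "legal_run m ms"
begin

lemma legal_moveD:
  assumes "t < length ms"
  shows "fst (ms ! t) < snd (ms ! t)" "fst (ms ! t) \<in> chips m" "snd (ms ! t) \<in> chips m"
    "conf_at ms t (fst (ms ! t)) = move_site ms t" "conf_at ms t (snd (ms ! t)) = move_site ms t"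
  using legal assms by (auto simp: legal_run_def move_site_def)

lemma conf_at_Suc_chip:
  assumes "t < length ms"
  shows "conf_at ms (Suc t) k = (if k = fst (ms ! t) then conf_at ms t k - 1
     else if k = snd (ms ! t) then conf_at ms t k + 1 else conf_at ms t k)"
  using legal_moveD(1)[OF assms] conf_at_Suc[OF assms]
  by (cases "ms ! t") (auto simp: fire_def)

lemma conf_at_Suc_unfired:
  "t < length ms \<Longrightarrow> conf_at ms t k \<noteq> move_site ms t \<Longrightarrow> conf_at ms (Suc t) k = conf_at ms t k"
  using conf_at_Suc_chip legal_moveD(4,5) by auto

lemma occupants_Suc:
  assumes t: "t < length ms"
  defines "v \<equiv> move_site ms t"
  shows "int (occupants m ms (Suc t) i)
    = int (occupants m ms t i) - (if i = v then 2 else 0) + (if i = v - 1 \<or> i = v + 1 then 1 else 0)"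
proof -
  define a b where "a = fst (ms ! t)" and "b = snd (ms ! t)"
  define S where "S j = {k \<in> chips m. conf_at ms t k = j}" for j
  have ab: "a < b" "a \<in> chips m" "b \<in> chips m" "conf_at ms t a = v" "conf_at ms t b = v"
    using legal_moveD[OF t] unfolding a_def b_def v_def by auto
  have "finite (S j)" for j
    unfolding S_def using finite_chips by simp
  have after: "{k \<in> chips m. conf_at ms (Suc t) k = i} = (if i = v then S i - {a, b}
      else if i = v - 1 then insert a (S i) else if i = v + 1 then insert b (S i) else S i)"
    unfolding S_def using conf_at_Suc_chip[OF t] ab unfolding a_def b_def by auto
  consider (fired) "i = v" | (left) "i = v - 1" | (right) "i = v + 1"
    | (other) "i \<noteq> v" "i \<noteq> v - 1" "i \<noteq> v + 1"
    by blast
  then show ?thesis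
  proof cases
    case fired
    have "{a, b} \<subseteq> S i" unfolding S_def using fired ab by auto
    then have "card (S i - {a, b}) = card (S i) - card {a, b}" "card {a, b} \<le> card (S i)"
      using \<open>finite (S i)\<close> by (simp_all add: card_Diff_subset card_mono)
    moreover have "card {a, b} = 2"
      using ab(1) by simp
    ultimately have "int (card (S i - {a, b})) = int (card (S i)) - 2"
      by simp
    then show ?thesis using after fired by (simp add: occupants_def S_def)
  next
    case left
    then have "a \<notin> S i" unfolding S_def using ab by auto
    then show ?thesis using after left \<open>finite (S i)\<close> by (simp add: occupants_def S_def)
  next
    case right
    then have "b \<notin> S i" unfolding S_def using ab by auto
    then show ?thesis using after right \<open>finite (S i)\<close> by (simp add: occupants_def S_def)
  next
    case other
    then show ?thesis using after by (simp add: occupants_def S_def)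
  qed
qed

lemma occupants_eq_occupancy:
  "t \<le> length ms \<Longrightarrow> int (occupants m ms t i) = occupancy m (remaining m ms t) i"
proof (induction t arbitrary: i)
  case 0
  have "{k \<in> chips m. conf_at ms 0 k = i} = (if i = 0 then chips m else {})"
    by (auto simp: conf_at_def init_config_def)
  then show ?case
    using card_chips[OF m_nonneg] occupancy_odometer[OF m_nonneg, of i] m_nonneg
    by (simp add: occupants_def remaining_0)
next
  case (Suc t)
  then show ?case
    unfolding remaining_Suc occupancy_decrement using occupants_Suc[of t i] by simp
qed

lemma two_le_occupants_move_site:
  assumes "t < length ms"
  shows "2 \<le> occupants m ms t (move_site ms t)"
proof -
  have "{fst (ms ! t), snd (ms ! t)} \<subseteq> {k \<in> chips m. conf_at ms t k = move_site ms t}"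
    using legal_moveD[OF assms] by auto
  moreover have "card {fst (ms ! t), snd (ms ! t)} = 2"
    using legal_moveD(1)[OF assms] by simp
  moreover have "finite {k \<in> chips m. conf_at ms t k = move_site ms t}"
    using finite_chips by simp
  ultimately show ?thesis
    unfolding occupants_def by (metis card_mono)
qed

lemma remaining_nonneg: "t \<le> length ms \<Longrightarrow> 0 \<le> remaining m ms t s"
proof (induction t arbitrary: s)
  case 0
  then show ?case by (simp add: remaining_0 odometer_nonneg)
next
  case (Suc t)
  then have t: "t < length ms" by simp
  show ?case
  proof (cases "move_site ms t = s")
    case True
    have "remaining m ms t s \<noteq> 0"
    proof
      assume "remaining m ms t s = 0"
      then have "occupancy m (remaining m ms t) s \<le> 1"
        using Suc.IH[of "s - 1"] Suc.IH[of "s + 1"] t final_occupancy_le_1[of m s]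
        by (simp add: occupancy_def)
      then show False
        using two_le_occupants_move_site[OF t] occupants_eq_occupancy[of t s] t True by simp
    qed
    then show ?thesis using Suc.IH[of s] t True by (simp add: remaining_Suc)
  qed (use Suc in \<open>simp add: remaining_Suc\<close>)
qed

lemma one_le_remaining_move_site: "t < length ms \<Longrightarrow> 1 \<le> remaining m ms t (move_site ms t)"
  using remaining_nonneg[of "Suc t" "move_site ms t"] by (simp add: remaining_Suc)

lemma regular_profile_remaining: "t \<le> length ms \<Longrightarrow> regular_profile m (remaining m ms t)"
proof (induction t)
  case 0
  then show ?case by (simp add: remaining_0 regular_profile_odometer)
next
  case (Suc t)
  then have t: "t < length ms" by simp
  have "2 \<le> occupancy m (remaining m ms t) (move_site ms t)"
    using two_le_occupants_move_site[OF t] occupants_eq_occupancy[of t "move_site ms t"] t by simp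
  moreover have "regular_profile m (remaining m ms t)"
    using Suc t by simp
  ultimately show ?case
    unfolding remaining_Suc by (rule regular_profile_decrement[rotated])
qed

lemma bounded_move_profile:
  assumes t: "t < length ms"
    and bound: "remaining m ms t (move_site ms t) \<le> m - \<bar>move_site ms t\<bar>"
  defines "v \<equiv> move_site ms t" and "R \<equiv> remaining m ms t"
  shows "occupants m ms t v = 2" "R (v + 1) = R v - (if 0 \<le> v then 1 else 0)"
    "R (v - 1) = R v - (if v \<le> 0 then 1 else 0)"
proof -
  have "2 \<le> occupancy m R v"
    using two_le_occupants_move_site[OF t] occupants_eq_occupancy[of t v] t
    unfolding v_def R_def by simp
  then have "occupancy m R v = 2 \<and> R (v + 1) = R v - (if 0 \<le> v then 1 else 0)
      \<and> R (v - 1) = R v - (if v \<le> 0 then 1 else 0)"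
    using regular_profile_firing_site regular_profile_remaining[of t] t bound
    unfolding v_def R_def by simp
  then show "occupants m ms t v = 2" "R (v + 1) = R v - (if 0 \<le> v then 1 else 0)"
    "R (v - 1) = R v - (if v \<le> 0 then 1 else 0)"
    using occupants_eq_occupancy[of t v] t unfolding R_def by simp_all
qed

lemma conf_at_exhausted:
  assumes "remaining m ms t p = 0" "conf_at ms t k = p"
  shows "t \<le> t' \<Longrightarrow> t' \<le> length ms \<Longrightarrow> conf_at ms t' k = p"
proof (induction t')
  case 0
  then show ?case using assms by simp
next
  case (Suc t')
  show ?case
  proof (cases "t = Suc t'")
    case False
    then have t': "t \<le> t'" "t' < length ms" using Suc.prems by auto
    have "remaining m ms t' p \<le> remaining m ms t p"
      using t'(1) by (rule remaining_antimono)
    then have "move_site ms t' \<noteq> p"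
      using remaining_nonneg[of "Suc t'" p] t' assms(1) by (auto simp: remaining_Suc)
    then show ?thesis using Suc.IH t' conf_at_Suc_unfired by simp
  qed (use assms in simp)
qed

lemma negative_chip_le: "t \<le> length ms \<Longrightarrow> k \<in> chips m \<Longrightarrow> k < 0 \<Longrightarrow> conf_at ms t k \<le> k + m"
proof (induction t arbitrary: k)
  case 0
  then show ?case by (simp add: conf_at_def init_config_def chips_def)
next
  case (Suc t)
  then have t: "t < length ms" by simp
  have "conf_at ms t (fst (ms ! t)) \<le> fst (ms ! t) + m" if "k = snd (ms ! t)"
    using Suc.IH[of "fst (ms ! t)"] legal_moveD[OF t] Suc.prems that by simp
  then show ?case
    using Suc.IH[of k] Suc.prems conf_at_Suc_chip[OF t, of k] legal_moveD[OF t] by auto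
qed

lemma site_vacated:
  assumes t: "t < length ms" and two: "occupants m ms t (move_site ms t) = 2" and k: "k \<in> chips m"
  shows "conf_at ms (Suc t) k \<noteq> move_site ms t"
proof
  assume after: "conf_at ms (Suc t) k = move_site ms t"
  define S where "S = {k \<in> chips m. conf_at ms t k = move_site ms t}"
  have "{fst (ms ! t), snd (ms ! t)} \<subseteq> S" "card {fst (ms ! t), snd (ms ! t)} = card S"
    using legal_moveD[OF t] two unfolding S_def occupants_def by auto
  then have "{fst (ms ! t), snd (ms ! t)} = S"
    using finite_chips by (intro card_subset_eq) (auto simp: S_def)
  then have "k \<noteq> fst (ms ! t) \<and> k \<noteq> snd (ms ! t) \<Longrightarrow> conf_at ms t k \<noteq> move_site ms t"
    using k unfolding S_def by blast
  then show False
    using after conf_at_Suc_chip[OF t, of k] legal_moveD[OF t] by (auto split: if_splits)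
qed

text \<open>If few firings are left at \<open>i\<close>, the previous firing at \<open>i\<close> emptied the site, so chip \<open>k\<close>
  arrived afterwards, from \<open>i + 1\<close> as the smaller or from \<open>i - 1\<close> as the larger chip of a move;
  the induction hypothesis for that move gives the bound. Otherwise \<open>- m \<le> k\<close> or
  \<open>negative_chip_le\<close> suffices.\<close>

lemma chip_lower_bound:
  "t < length ms \<Longrightarrow> k \<in> chips m \<Longrightarrow> conf_at ms t k = move_site ms t
    \<Longrightarrow> - (remaining m ms t (move_site ms t) + max 0 (- move_site ms t)) \<le> k"
proof (induction t arbitrary: k rule: less_induct)
  case (less t)
  note t = less.prems(1) and k = less.prems(2,3)
  define i where "i = move_site ms t"
  define R where "R = remaining m ms t i"
  have "1 \<le> R" "- m \<le> k"
    using one_le_remaining_move_site[OF t] k(1) unfolding R_def i_def by (auto simp: chips_def)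
  consider (far) "m \<le> R + max 0 (- i)" | (right) "0 < i" "m - i \<le> R" | (near) "R + 1 \<le> m - \<bar>i\<bar>"
    by (cases "0 < i"; cases "m - \<bar>i\<bar> \<le> R") auto
  then have "- (R + max 0 (- i)) \<le> k"
  proof cases
    case far
    then show ?thesis using \<open>- m \<le> k\<close> by linarith
  next
    case right
    then show ?thesis
      using negative_chip_le[of t k] k t \<open>1 \<le> R\<close> unfolding i_def by (cases "k < 0") auto
  next
    case near
    have "R + 1 \<le> odometer m i"
      using near odometer_ge[of m i] by linarith
    then have "fire_count ms i t - 1 < fire_count ms i t"
      unfolding R_def remaining_def by linarith
    then obtain t1 where t1: "t1 < t" "move_site ms t1 = i" "fire_count ms i t1 = fire_count ms i t - 1"
      using fire_count_attained by blast
    then have "t1 < length ms" "remaining m ms t1 i = R + 1"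
      using t \<open>R + 1 \<le> odometer m i\<close> unfolding R_def remaining_def by auto
    then have profile: "occupants m ms t1 i = 2"
        "remaining m ms t1 (i + 1) = R + 1 - (if 0 \<le> i then 1 else 0)"
        "remaining m ms t1 (i - 1) = R + 1 - (if i \<le> 0 then 1 else 0)"
      using bounded_move_profile[of t1] t1(2) near by simp_all
    have "conf_at ms (Suc t1) k \<noteq> i"
      using site_vacated[OF \<open>t1 < length ms\<close>] t1(2) profile(1) k(1) by simp
    then obtain \<tau> where \<tau>: "Suc t1 \<le> \<tau>" "\<tau> < t" "conf_at ms \<tau> k \<noteq> i" "conf_at ms (Suc \<tau>) k = i"
      using exists_switch[of "\<lambda>\<tau>. conf_at ms \<tau> k \<noteq> i" "Suc t1" t] k(2) t1(1) unfolding i_def by auto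
    have "\<tau> < length ms" using \<tau>(2) t by simp
    note arrival = conf_at_Suc_chip[OF this, of k] legal_moveD[OF this]
    have "t1 \<le> \<tau>" using \<tau>(1) by simp
    consider (from_right) "k = fst (ms ! \<tau>)" "move_site ms \<tau> = i + 1"
      | (from_left) "k = snd (ms ! \<tau>)" "move_site ms \<tau> = i - 1"
      using arrival \<tau>(3,4) by (auto split: if_splits)
    then show ?thesis
    proof cases
      case from_right
      then have "- (remaining m ms \<tau> (i + 1) + max 0 (- (i + 1))) \<le> k"
        using less.IH[OF \<tau>(2) \<open>\<tau> < length ms\<close>] k(1) arrival by simp
      moreover have "remaining m ms \<tau> (i + 1) \<le> remaining m ms t1 (i + 1)"
        using \<open>t1 \<le> \<tau>\<close> by (rule remaining_antimono)
      ultimately show ?thesis using profile(2) by (auto simp: max_def split: if_splits)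
    next
      case from_left
      then have "- (remaining m ms \<tau> (i - 1) + max 0 (- (i - 1))) \<le> fst (ms ! \<tau>)"
        using less.IH[OF \<tau>(2) \<open>\<tau> < length ms\<close>] arrival by simp
      moreover have "remaining m ms \<tau> (i - 1) \<le> remaining m ms t1 (i - 1)"
        using \<open>t1 \<le> \<tau>\<close> by (rule remaining_antimono)
      ultimately show ?thesis using profile(3) arrival from_left by (auto simp: max_def split: if_splits)
    qed
  qed
  then show ?case unfolding R_def i_def .
qed

end

locale complete_chip_run = legal_chip_run +
  assumes final_inj: "inj_on (conf_at ms (length ms)) (chips m)"
begin

lemma occupants_final_le_1: "occupants m ms (length ms) i \<le> 1"
proof -
  define S where "S = {k \<in> chips m. conf_at ms (length ms) k = i}"
  have "inj_on (conf_at ms (length ms)) S"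
    using final_inj by (rule inj_on_subset) (auto simp: S_def)
  then have "card S \<le> card {i}"
    by (rule card_inj_on_le) (auto simp: S_def)
  then show ?thesis by (simp add: occupants_def S_def)
qed

lemma remaining_final: "remaining m ms (length ms) s = 0"
proof (rule stable_profile_zero[where m = m and R = "remaining m ms (length ms)"])
  show "0 \<le> remaining m ms (length ms) s" for s
    by (simp add: remaining_nonneg)
  show "remaining m ms (length ms) s = 0" if "m \<le> \<bar>s\<bar>" for s
    using remaining_nonneg[of "length ms" s] odometer_eq_0[OF that] by (simp add: remaining_def)
  show "occupancy m (remaining m ms (length ms)) s \<le> 1" for s
    using occupants_final_le_1[of s] occupants_eq_occupancy[of "length ms" s] by simp
qed

lemma fire_count_final: "int (fire_count ms s (length ms)) = odometer m s"
  using remaining_final[of s] by (simp add: remaining_def)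

lemma card_later_moves:
  assumes t: "t < length ms"
  shows "int (card {t'. t < t' \<and> t' < length ms \<and> move_site ms t' = move_site ms t})
    = remaining m ms t (move_site ms t) - 1"
proof -
  define s where "s = move_site ms t"
  define A B where "A = {t'. t' < Suc t \<and> move_site ms t' = s}"
    and "B = {t'. t < t' \<and> t' < length ms \<and> move_site ms t' = s}"
  have "{t'. t' < length ms \<and> move_site ms t' = s} = A \<union> B" "A \<inter> B = {}"
    unfolding A_def B_def using t by auto
  moreover have "finite A" "finite B"
    unfolding A_def B_def by simp_all
  ultimately have "fire_count ms s (length ms) = card A + card B"
    unfolding fire_count_def by (simp add: card_Un_disjoint)
  moreover have "card A = fire_count ms s t + 1"
    unfolding A_def fire_count_def[symmetric] by (simp add: fire_count_Suc s_def)
  ultimately show ?thesis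
    using fire_count_final[of s] unfolding B_def s_def remaining_def by simp
qed

lemma move_with_remaining:
  assumes "0 \<le> j" "j + 1 \<le> odometer m s"
  obtains t where "t < length ms" "move_site ms t = s" "remaining m ms t s = j + 1"
proof -
  have "nat (odometer m s - j - 1) < fire_count ms s (length ms)"
    using fire_count_final[of s] assms by linarith
  then obtain t where "t < length ms" "move_site ms t = s" "fire_count ms s t = nat (odometer m s - j - 1)"
    using fire_count_attained by blast
  then show ?thesis using that assms by (simp add: remaining_def)
qed

text \<open>The chip ending at \<open>p\<close> was delivered by the last firing at the neighbour of \<open>p\<close> nearer
  the origin.\<close>

lemma final_position_le:
  assumes k: "k \<in> chips m" "k < 0"
  shows "conf_at ms (length ms) k \<le> k"
proof -
  define p where "p = conf_at ms (length ms) k"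
  have "k \<in> {c \<in> chips m. conf_at ms (length ms) c = p}"
    using k by (simp add: p_def)
  then have "0 < occupants m ms (length ms) p"
    unfolding occupants_def using finite_chips by (auto simp: card_gt_0_iff)
  then have "final_occupancy m p = 1"
    using occupants_eq_occupancy[of "length ms" p] remaining_final final_occupancy_le_1[of m p]
    by (simp add: occupancy_def)
  then have p: "p \<noteq> 0" "\<bar>p\<bar> \<le> m"
    by (auto simp: final_occupancy_def split: if_splits)
  have settles: "c = k"
    if t: "t < length ms" and c: "c \<in> chips m" "conf_at ms (Suc t) c = p"
      and exhausted: "remaining m ms t p = 0" for t c
  proof -
    have "Suc t \<le> length ms" using t by simp
    have "remaining m ms (Suc t) p \<le> remaining m ms t p"
      by (rule remaining_antimono) simp
    then have "remaining m ms (Suc t) p = 0"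
      using remaining_nonneg[OF \<open>Suc t \<le> length ms\<close>, of p] exhausted by linarith
    then have "conf_at ms (length ms) c = p"
      using conf_at_exhausted[OF _ c(2) \<open>Suc t \<le> length ms\<close>] by simp
    then show ?thesis
      using final_inj c k unfolding p_def inj_on_def by blast
  qed
  have last_move: "\<exists>t < length ms. move_site ms t = v \<and> remaining m ms t v = 1
      \<and> remaining m ms t p = 0" if "v = p - sgn p" for v
  proof -
    have "1 \<le> m - \<bar>v\<bar>" using that p by (auto simp: sgn_if)
    then obtain t where t: "t < length ms" "move_site ms t = v" "remaining m ms t v = 1"
      using move_with_remaining[of 0 v] odometer_ge[of m v] by auto
    then show ?thesis
      using bounded_move_profile[OF t(1)] \<open>1 \<le> m - \<bar>v\<bar>\<close> that p by (auto simp: sgn_if)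
  qed
  consider (negative) "p < 0" | (positive) "0 < p" using p by linarith
  then show ?thesis
  proof cases
    case negative
    then obtain t where t: "t < length ms" "move_site ms t = p + 1" "remaining m ms t (p + 1) = 1"
        "remaining m ms t p = 0"
      using last_move[of "p + 1"] by (auto simp: sgn_if)
    then have "fst (ms ! t) = k"
      using settles[OF t(1)] legal_moveD[OF t(1)] conf_at_Suc_chip[OF t(1)] by simp
    then show ?thesis
      using chip_lower_bound[OF t(1)] legal_moveD[OF t(1)] t negative unfolding p_def by simp
  next
    case positive
    then obtain t where t: "t < length ms" "move_site ms t = p - 1" "remaining m ms t (p - 1) = 1"
        "remaining m ms t p = 0"
      using last_move[of "p - 1"] by (auto simp: sgn_if)
    then have "snd (ms ! t) = k"
      using settles[OF t(1)] legal_moveD[OF t(1)] conf_at_Suc_chip[OF t(1)] by auto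
    moreover have "- 1 \<le> fst (ms ! t)"
      using chip_lower_bound[OF t(1) legal_moveD(2,4)[OF t(1)]] t positive by simp
    ultimately show ?thesis
      using legal_moveD(1)[OF t(1)] k by simp
  qed
qed

lemma negative_chip_left_of_move:
  assumes k: "- m \<le> k" "k < 0" and x: "0 \<le> x" "x \<le> m - 1"
  shows "\<exists>t. is_move_xy ms x (- k - 1) t \<and> conf_at ms t k \<le> x + k + 1"
proof -
  define y s j where "y = - k - 1" and "s = x - y" and "j = min x y"
  have "0 \<le> j" "\<bar>s\<bar> + j \<le> m - 1"
    using k x unfolding y_def s_def j_def by (auto simp: min_def)
  moreover have "j + 1 \<le> odometer m s"
    using odometer_ge[of m s] \<open>\<bar>s\<bar> + j \<le> m - 1\<close> by linarith
  ultimately obtain t where t: "t < length ms" "move_site ms t = s" "remaining m ms t s = j + 1"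
    using move_with_remaining by blast
  have "is_move_xy ms x y t"
    using card_later_moves[OF t(1)] t unfolding is_move_xy_def s_def j_def by simp
  moreover have "conf_at ms t k \<le> s"
  proof (rule ccontr)
    assume "\<not> conf_at ms t k \<le> s"
    moreover have "conf_at ms (length ms) k \<le> s"
      using final_position_le[of k] k x unfolding s_def y_def by (simp add: chips_def)
    ultimately obtain \<tau> where \<tau>: "t \<le> \<tau>" "\<tau> < length ms" "\<not> conf_at ms \<tau> k \<le> s"
        "conf_at ms (Suc \<tau>) k \<le> s"
      using exists_switch[of "\<lambda>\<tau>. \<not> conf_at ms \<tau> k \<le> s" t "length ms"] t(1) by auto
    then have "k = fst (ms ! \<tau>)" "move_site ms \<tau> = s + 1"
      using conf_at_Suc_chip[OF \<tau>(2), of k] legal_moveD[OF \<tau>(2)] by (auto split: if_splits)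
    then have "- (remaining m ms \<tau> (s + 1) + max 0 (- (s + 1))) \<le> k"
      using chip_lower_bound[OF \<tau>(2)] legal_moveD[OF \<tau>(2)] by simp
    moreover have "remaining m ms \<tau> (s + 1) \<le> remaining m ms t (s + 1)"
      using \<tau>(1) by (rule remaining_antimono)
    moreover have "remaining m ms t (s + 1) = j + 1 - (if 0 \<le> s then 1 else 0)"
      using bounded_move_profile(2)[OF t(1)] t \<open>\<bar>s\<bar> + j \<le> m - 1\<close> by simp
    ultimately show False
      unfolding j_def s_def y_def by (auto simp: min_def max_def split: if_splits)
  qed
  ultimately show ?thesis
    unfolding s_def y_def by auto
qed

end

section \<open>Reflection\<close>

definition mirror_run :: "(int \<times> int) list \<Rightarrow> (int \<times> int) list" where
  "mirror_run ms = map (\<lambda>(a, b). (- b, - a)) ms"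

lemma length_mirror_run [simp]: "length (mirror_run ms) = length ms"
  by (simp add: mirror_run_def)

lemma nth_mirror_run [simp]:
  "t < length ms \<Longrightarrow> mirror_run ms ! t = (- snd (ms ! t), - fst (ms ! t))"
  by (simp add: mirror_run_def split_beta)

text \<open>The hypothesis \<open>a \<noteq> b\<close> is needed: \<open>fire c (a, a)\<close> moves chip \<open>a\<close> right, its mirror image
  moves it left.\<close>

lemma foldl_fire_mirror_run:
  "\<forall>(a, b) \<in> set ms. a \<noteq> b
    \<Longrightarrow> foldl fire (\<lambda>k. - c (- k)) (mirror_run ms) = (\<lambda>k. - foldl fire c ms (- k))"
proof (induction ms arbitrary: c)
  case (Cons ab ms)
  obtain a b where "ab = (a, b)" by fastforce
  moreover have "fire (\<lambda>k. - c (- k)) (- b, - a) = (\<lambda>k. - fire c (a, b) (- k))"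
    using Cons.prems \<open>ab = (a, b)\<close> by (auto simp: fire_def fun_eq_iff)
  ultimately show ?case
    using Cons by (simp add: mirror_run_def)
qed (simp add: mirror_run_def)

context legal_chip_run
begin

lemma conf_at_mirror_run: "conf_at (mirror_run ms) t k = - conf_at ms t (- k)"
proof -
  have "fst ab \<noteq> snd ab" if "ab \<in> set ms" for ab
    using that by (auto simp: in_set_conv_nth dest!: legal_moveD(1))
  then have "\<forall>(a, b) \<in> set (take t ms). a \<noteq> b"
    using set_take_subset by fastforce
  then have "foldl fire (\<lambda>k. - init_config (- k)) (mirror_run (take t ms))
      = (\<lambda>k. - foldl fire init_config (take t ms) (- k))"
    by (rule foldl_fire_mirror_run)
  then show ?thesis
    by (simp add: conf_at_def mirror_run_def take_map init_config_def)
qed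

lemma move_site_mirror_run: "t < length ms \<Longrightarrow> move_site (mirror_run ms) t = - move_site ms t"
  using legal_moveD(5) by (simp add: move_site_def conf_at_mirror_run)

lemma legal_run_mirror_run: "legal_run m (mirror_run ms)"
  unfolding legal_run_def
  using legal_moveD by (simp add: conf_at_mirror_run)

lemma is_move_xy_mirror_run: "is_move_xy (mirror_run ms) y x t = is_move_xy ms x y t"
proof -
  have site: "move_site (mirror_run ms) t' = y - x \<longleftrightarrow> move_site ms t' = x - y"
    if "t' < length ms" for t'
    using move_site_mirror_run[OF that] by linarith
  then have "{t'. t < t' \<and> t' < length ms \<and> move_site (mirror_run ms) t' = y - x}
      = {t'. t < t' \<and> t' < length ms \<and> move_site ms t' = x - y}"
    by blast
  then show ?thesis
    using site[of t] unfolding is_move_xy_def by (auto simp: min.commute)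
qed

end

lemma (in complete_chip_run) complete_run_mirror_run: "complete_run m (mirror_run ms)"
proof -
  have "inj_on (\<lambda>k. - conf_at ms (length ms) (- k)) (chips m)"
  proof (rule inj_onI)
    fix x y
    assume "x \<in> chips m" "y \<in> chips m" "- conf_at ms (length ms) (- x) = - conf_at ms (length ms) (- y)"
    then have "- x = - y"
      using inj_onD[OF final_inj, of "- x" "- y"] by simp
    then show "x = y" by simp
  qed
  moreover have "conf_at (mirror_run ms) (length ms) = (\<lambda>k. - conf_at ms (length ms) (- k))"
    by (simp add: fun_eq_iff conf_at_mirror_run)
  ultimately show ?thesis
    using legal_run_mirror_run by (simp add: complete_run_def)
qed

theorem lemma2p9:
  fixes m :: int and ms :: "(int \<times> int) list"
  assumes "m \<ge> 1" and "complete_run m ms"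
  shows "(\<forall>k x. -m \<le> k \<and> k < 0 \<and> 0 \<le> x \<and> x \<le> m - 1 \<longrightarrow>
            (\<exists>t. is_move_xy ms x (-k-1) t \<and> conf_at ms t k \<le> x + k + 1))
       \<and> (\<forall>k y. 0 < k \<and> k \<le> m \<and> 0 \<le> y \<and> y \<le> m - 1 \<longrightarrow>
            (\<exists>t. is_move_xy ms (k-1) y t \<and> conf_at ms t k \<ge> k - 1 - y))"
proof -
  interpret complete_chip_run m ms
    using assms by unfold_locales (auto simp: complete_run_def)
  interpret mirror: complete_chip_run m "mirror_run ms"
    using assms complete_run_mirror_run by unfold_locales (auto simp: complete_run_def)
  show ?thesis
  proof (intro conjI allI impI)
    fix k x :: int
    assume "- m \<le> k \<and> k < 0 \<and> 0 \<le> x \<and> x \<le> m - 1"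
    then show "\<exists>t. is_move_xy ms x (- k - 1) t \<and> conf_at ms t k \<le> x + k + 1"
      using negative_chip_left_of_move[of k x] by simp
  next
    fix k y :: int
    assume "0 < k \<and> k \<le> m \<and> 0 \<le> y \<and> y \<le> m - 1"
    then obtain t where "is_move_xy (mirror_run ms) y (k - 1) t" "conf_at (mirror_run ms) t (- k) \<le> y - k + 1"
      using mirror.negative_chip_left_of_move[of "- k" y] by auto
    then have "is_move_xy ms (k - 1) y t" "k - 1 - y \<le> conf_at ms t k"
      using is_move_xy_mirror_run[of y "k - 1" t] conf_at_mirror_run[of t "- k"] by simp_all
    then show "\<exists>t. is_move_xy ms (k - 1) y t \<and> k - 1 - y \<le> conf_at ms t k"
      by blast
  qed
qed

end
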